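(* Average positivity of the entropy production of a control operation. In the control-step setting described in the context, for $\beta>0$ define for each outcome $r$ with $p(r)>0$ $$\Sigma^{\mathrm{ctrl}}(r) = -\ln p(r) + S_{\mathrm{vN}}(\rho^+(r)) - S_{\mathrm{vN}}(\rho^-) - \beta\,Q^{\mathrm{ctrl}}_S(r).$$ Then $\sum_{r:\,p(r)>0} p(r)\,\Sigma^{\mathrm{ctrl}}(r) \ge 0$. (Individual values $\Sigma^{\mathrm{ctrl}}(r)$ may be negative.)
   Context: Control-step setting: finite-dimensional Hilbert spaces $\mathcal H_S$ (system) and $\mathcal H_{U(1)},\dots,\mathcal H_{U(n)}$ (units), with a Hermitian system Hamiltonian $H_S$. The state just before the control operation is a density operator $\rho^-$ on $\mathcal H_S\otimes\mathcal H_{U(1)}\otimes\cdots\otimes\mathcal H_{U(n)}$ of the form $\rho^-_{SU(1)\cdots U(n-1)}\otimes\rho_{U(n)}$. The control operation consists of a unitary $V$ acting on $\mathcal H_S\otimes\mathcal H_{U(n)}$ followed by a measurement of $U(n)$ with positive operators $\{P(r)\}_r$ on $\mathcal H_{U(n)}$, $\sum_r P(r)^2=1$; $p(r)=\mathrm{tr}\{P(r)V\rho^-V^\dagger P(r)\}$, $\rho^+(r) = P(r)V\rho^-V^\dagger P(r)/p(r)$, and $Q^{\mathrm{ctrl}}_S(r)=\mathrm{tr}\{H_S(\rho^+(r)-V\rho^-V^\dagger)\}$. $S_{\mathrm{vN}}(\sigma)=-\mathrm{tr}\{\sigma\ln\sigma\}$. (The term $-\ln p(r)$ is the change of the trajectory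 term $-\ln p(\mathbf r_n)$, since $p(\mathbf r_n) = p(r_n|\mathbf r_{n-1})p(\mathbf r_{n-1})$.) *)

theory Defs
  imports "HOL-Analysis.Analysis"
begin

text \<open>Operators on a finite-dimensional Hilbert space with orthonormal basis indexed by a
  finite type 'i are complex matrices complex^'i^'i.  Tensor products of spaces correspond to
  product index types.\<close>

definition cadj :: "complex^'i^'j \<Rightarrow> complex^'j^'i" where
  "cadj A = (\<chi> i j. cnj (A $ j $ i))"

definition hermitian :: "complex^'i^'i \<Rightarrow> bool" where
  "hermitian A \<longleftrightarrow> cadj A = A"

definition unitary_op :: "complex^'i^'i \<Rightarrow> bool" where
  "unitary_op U \<longleftrightarrow> cadj U ** U = mat 1 \<and> U ** cadj U = mat 1"

definition positive_op :: "complex^'i^'i \<Rightarrow> bool" where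
  "positive_op A \<longleftrightarrow> (\<forall>x::complex^'i.
      Im (\<Sum>i\<in>UNIV. cnj (x $ i) * (A *v x) $ i) = 0 \<and>
      0 \<le> Re (\<Sum>i\<in>UNIV. cnj (x $ i) * (A *v x) $ i))"

definition density_op :: "complex^'i^'i \<Rightarrow> bool" where
  "density_op \<rho> \<longleftrightarrow> positive_op \<rho> \<and> trace \<rho> = 1"

definition diag_op :: "('i \<Rightarrow> real) \<Rightarrow> complex^'i^'i" where
  "diag_op d = (\<chi> i j. if i = j then complex_of_real (d i) else 0)"

definition mat_fun :: "(real \<Rightarrow> real) \<Rightarrow> complex^'i^'i \<Rightarrow> complex^'i^'i" where
  "mat_fun g A = (let (U, lam) = (SOME (U, lam). unitary_op U \<and> A = U ** diag_op lam ** cadj U)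
                  in U ** diag_op (g \<circ> lam) ** cadj U)"

text \<open>von Neumann entropy S(sigma) = - tr(sigma ln sigma); note ln 0 = 0 in Isabelle,
  which realises the convention 0 ln 0 = 0.\<close>
definition vN_entropy :: "complex^'i^'i \<Rightarrow> real" where
  "vN_entropy \<sigma> = - Re (trace (\<sigma> ** mat_fun ln \<sigma>))"

definition tensor_op :: "complex^'a::finite^'a \<Rightarrow> complex^'b::finite^'b \<Rightarrow> complex^('a\<times>'b)^('a\<times>'b)" where
  "tensor_op A B = (\<chi> i j. A $ fst i $ fst j * B $ snd i $ snd j)"

text \<open>Full space H_S (x) H_M (x) H_U, indexed by ('s \<times> 'm) \<times> 'u, where H_M stands for
  H_{U(1)} (x) ... (x) H_{U(n-1)} and H_U for H_{U(n)}.\<close>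

text \<open>V (x) 1_M for V acting on H_S (x) H_U.\<close>
definition lift_SU :: "complex^('s::finite\<times>'u::finite)^('s\<times>'u) \<Rightarrow> complex^(('s\<times>'m::finite)\<times>'u)^(('s\<times>'m)\<times>'u)" where
  "lift_SU V = (\<chi> i j. if snd (fst i) = snd (fst j)
       then V $ (fst (fst i), snd i) $ (fst (fst j), snd j) else 0)"

text \<open>H (x) 1_M (x) 1_U for H acting on H_S.\<close>
definition lift_S :: "complex^'s::finite^'s \<Rightarrow> complex^(('s\<times>'m::finite)\<times>'u::finite)^(('s\<times>'m)\<times>'u)" where
  "lift_S H = (\<chi> i j. if snd (fst i) = snd (fst j) \<and> snd i = snd j
       then H $ fst (fst i) $ fst (fst j) else 0)"

text \<open>1_S (x) 1_M (x) P for P acting on H_U.\<close>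
definition lift_U :: "complex^'u::finite^'u \<Rightarrow> complex^(('s::finite\<times>'m::finite)\<times>'u)^(('s\<times>'m)\<times>'u)" where
  "lift_U P = (\<chi> i j. if fst i = fst j then P $ snd i $ snd j else 0)"

end

theory Submission
  imports Defs
begin

text \<open>
  Put sigma = W rho_minus W* and X(r) = P(r) sigma P(r), so that p(r) = tr X(r) and
  p(r) rho_plus(r) = X(r). The averaged heat vanishes: H_S commutes with every P(r) and
  \<Sum> P(r)^2 = 1, hence \<Sum>_r tr (H_S X(r)) = tr (H_S sigma) = \<Sum>_r p(r) tr (H_S sigma).
  It remains to show S(rho_minus) \<le> - \<Sum>_r p(r) ln p(r) + \<Sum>_r p(r) S(rho_plus(r)).
  Diagonalise rho_minus = U diag(s) U* and rho_plus(r) = U(r) diag(\<mu>(r)) U(r)*. The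
  eigenvalues p(r) \<mu>(r)(k) of X(r) are the averages \<Sum>_j d((r,k),j) s(j) with weights
  d((r,k),j) = |(U(r)* P(r) W U)(k,j)|^2, whose columns sum to 1 (completeness of the P(r))
  and whose rows sum to at most 1. Jensen's inequality for x ln x turns such a doubly
  substochastic average into an increase of entropy. The unitary diagonalisation of Hermitian
  matrices is proved directly, by maximising the quadratic form on the unit sphere of
  successive orthogonal complements.
\<close>

section \<open>Complex inner product\<close>

definition cinner :: "complex^'n \<Rightarrow> complex^'n \<Rightarrow> complex" where
  "cinner x y = (\<Sum>i\<in>UNIV. cnj (x $ i) * y $ i)"

lemma positive_op_iff_cinner:
  "positive_op A \<longleftrightarrow> (\<forall>x. Im (cinner x (A *v x)) = 0 \<and> 0 \<le> Re (cinner x (A *v x)))"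
  unfolding positive_op_def cinner_def ..

lemma cinner_adj: "cinner x (A *v y) = cinner (cadj A *v x) y"
  unfolding cinner_def cadj_def matrix_vector_mult_def
  by (simp add: sum_distrib_left sum_distrib_right mult_ac) (subst sum.swap, simp add: mult_ac)

lemma cinner_commute: "cinner y x = cnj (cinner x y)"
  unfolding cinner_def by (simp add: mult.commute)

lemma cinner_add_right: "cinner x (y + z) = cinner x y + cinner x z"
  unfolding cinner_def by (simp add: distrib_left sum.distrib)

lemma cinner_add_left: "cinner (x + y) z = cinner x z + cinner y z"
  unfolding cinner_def by (simp add: distrib_right sum.distrib)

lemma cinner_diff_right: "cinner x (y - z) = cinner x y - cinner x z"
  unfolding cinner_def by (simp add: right_diff_distrib sum_subtractf)

lemma cinner_scale_right: "cinner x (c *s y) = c * cinner x y"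
  unfolding cinner_def by (simp add: sum_distrib_left mult_ac)

lemma cinner_scale_left: "cinner (c *s x) y = cnj c * cinner x y"
  unfolding cinner_def by (simp add: sum_distrib_left mult_ac)

lemma cinner_zero_left [simp]: "cinner 0 y = 0"
  unfolding cinner_def by simp

lemma cinner_self: "cinner x x = of_real ((norm x)\<^sup>2)"
proof -
  have "(norm x)\<^sup>2 = (\<Sum>i\<in>UNIV. (cmod (x $ i))\<^sup>2)"
    unfolding norm_vec_def L2_set_def by (simp add: sum_nonneg)
  then show ?thesis
    unfolding cinner_def by (simp add: of_real_sum complex_norm_square mult.commute del: of_real_power)
qed

lemma cinner_axis_left: "cinner (axis i 1) y = y $ i"
  unfolding cinner_def axis_def by (simp add: if_distrib[of cnj] if_distrib[of "\<lambda>a. a * _"] cong: if_cong)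

lemma Re_cinner: "Re (cinner u x) = inner u x"
  unfolding cinner_def inner_vec_def Re_sum by (rule sum.cong) (auto simp: inner_complex_def)

lemma Im_cinner: "Im (cinner u x) = inner (\<i> *s u) x"
  unfolding cinner_def inner_vec_def Im_sum by (rule sum.cong) (auto simp: inner_complex_def)

lemma continuous_on_cinner_right: "continuous_on S (\<lambda>x. cinner u x)"
  unfolding cinner_def by (intro continuous_intros continuous_on_component continuous_on_id)

lemma continuous_on_quadratic_form: "continuous_on S (\<lambda>x. Re (cinner x ((A::complex^'n^'n) *v x)))"
  unfolding cinner_def matrix_vector_mult_def
  by (intro continuous_intros continuous_on_component continuous_on_id)

lemma mat_mult_vector: "(mat c :: complex^'n^'n) *v z = c *s z"
  by (simp add: vec_eq_iff matrix_vector_mult_def mat_def if_distrib[of "\<lambda>a. a * _"] cong: if_cong)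

lemma matrix_vector_mult_scale: "(A::complex^'n^'m) *v (c *s x) = c *s (A *v x)"
  by (simp add: vec_eq_iff matrix_vector_mult_def sum_distrib_left mult_ac)

lemma matrix_vector_mult_axis: "((A::complex^'n^'m) *v axis j 1) $ i = A $ i $ j"
  unfolding matrix_vector_mult_def axis_def by (simp add: if_distrib[of "\<lambda>a. _ * a"] cong: if_cong)

lemma norm_vector_scale: "norm (c *s (x::complex^'n)) = cmod c * norm x"
proof -
  have "complex_of_real ((norm (c *s x))\<^sup>2) = complex_of_real ((cmod c * norm x)\<^sup>2)"
    unfolding cinner_self[symmetric] cinner_scale_left cinner_scale_right
    by (simp add: cinner_self power_mult_distrib complex_norm_square[symmetric] mult_ac)
  then show ?thesis
    by (simp add: power2_eq_iff_nonneg del: of_real_power)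
qed

section \<open>Matrix algebra\<close>

lemma cadj_mult: "cadj ((A::complex^'n^'m) ** B) = cadj B ** cadj A"
  unfolding cadj_def matrix_matrix_mult_def by (simp add: vec_eq_iff mult.commute)

lemma cadj_cadj [simp]: "cadj (cadj A) = A"
  unfolding cadj_def by (simp add: vec_eq_iff)

lemma cadj_mat_1 [simp]: "cadj (mat 1) = mat 1"
  unfolding cadj_def mat_def by (auto simp: vec_eq_iff)

lemma unitary_op_mat_1: "unitary_op (mat 1)"
  unfolding unitary_op_def by simp

lemma unitary_op_mult: "unitary_op U \<Longrightarrow> unitary_op W \<Longrightarrow> unitary_op ((U::complex^'n^'n) ** W)"
  unfolding unitary_op_def cadj_mult by (metis matrix_mul_assoc matrix_mul_lid)

lemma unitary_op_cadj: "unitary_op U \<Longrightarrow> unitary_op (cadj U)"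
  unfolding unitary_op_def by simp

lemma unitary_op_cancel:
  assumes "unitary_op U"
  shows "Y ** cadj U ** U = Y" and "Y ** U ** cadj U = Y"
  using assms unfolding unitary_op_def by (metis matrix_mul_assoc matrix_mul_rid)+

lemma matrix_add_rdistrib: "((A::complex^'n^'m) + B) ** C = A ** C + B ** C"
  by (simp add: vec_eq_iff matrix_matrix_mult_def sum.distrib distrib_right)

lemma matrix_diff_ldistrib: "(A::complex^'n^'m) ** (B - C) = A ** B - A ** C"
  by (simp add: vec_eq_iff matrix_matrix_mult_def sum_subtractf right_diff_distrib)

lemma sum_matrix_mult_left: "(\<Sum>r\<in>S. A r :: complex^'n^'m) ** B = (\<Sum>r\<in>S. A r ** B)"
  by (induction S rule: infinite_finite_induct) (auto simp: matrix_add_rdistrib)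

lemma sum_matrix_mult_right: "B ** (\<Sum>r\<in>S. A r :: complex^'n^'m) = (\<Sum>r\<in>S. B ** A r)"
  by (induction S rule: infinite_finite_induct) (auto simp: matrix_add_ldistrib)

lemma sum_matrix_entry: "(\<Sum>r\<in>S. A r :: complex^'n^'m) $ i $ j = (\<Sum>r\<in>S. A r $ i $ j)"
  by (induction S rule: infinite_finite_induct) auto

lemma sum_UNIV_prod: "(\<Sum>k\<in>(UNIV::('a::finite \<times> 'b::finite) set). f k) = (\<Sum>a\<in>UNIV. \<Sum>b\<in>UNIV. f (a, b))"
  by (simp add: sum.cartesian_product' UNIV_Times_UNIV[symmetric] del: UNIV_Times_UNIV)

lemma scaleR_matrix_entry: "(c *\<^sub>R (A :: complex^'n^'m)) $ i $ j = of_real c * A $ i $ j"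
  by (simp only: vector_scaleR_component) (simp add: scaleR_conv_of_real)

lemma trace_sum: "trace (\<Sum>r\<in>S. A r :: complex^'n^'n) = (\<Sum>r\<in>S. trace (A r))"
  by (induction S rule: infinite_finite_induct) (auto simp: trace_add trace_0[unfolded mat_0])

lemma trace_scaleR: "trace (c *\<^sub>R (A :: complex^'n^'n)) = of_real c * trace A"
  unfolding trace_def scaleR_matrix_entry by (simp add: sum_distrib_left)

lemma trace_mult_scaleR_right: "trace ((H :: complex^'n^'n) ** (c *\<^sub>R A)) = of_real c * trace (H ** A)"
  unfolding matrix_scalar_ac scalar_matrix_assoc[symmetric] trace_scaleR ..

lemma trace_unitary_conj: "unitary_op U \<Longrightarrow> trace (U ** A ** cadj U) = trace A"
  unfolding unitary_op_def by (metis matrix_mul_assoc matrix_mul_lid trace_mul_sym)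

lemma matrix_mult_diag_op_entry: "((M::complex^'n^'m) ** diag_op l) $ i $ k = M $ i $ k * of_real (l k)"
  unfolding matrix_matrix_mult_def diag_op_def by (simp add: if_distrib[of "\<lambda>a. _ * a"] cong: if_cong)

lemma diag_op_mult_vector: "(diag_op l *v x) $ i = of_real (l i) * x $ i"
  unfolding diag_op_def matrix_vector_mult_def by (simp add: if_distrib[of "\<lambda>a. a * _"] cong: if_cong)

lemma diag_op_mult: "diag_op a ** diag_op b = diag_op (\<lambda>i. a i * b i)"
  by (simp add: vec_eq_iff matrix_mult_diag_op_entry) (simp add: diag_op_def)

lemma scaleR_diag_op: "c *\<^sub>R diag_op l = diag_op (\<lambda>i. c * l i)"
  by (simp add: vec_eq_iff scaleR_matrix_entry diag_op_def del: vector_scaleR_component)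

lemma trace_diag_op: "trace (diag_op l) = of_real (\<Sum>i\<in>UNIV. l i)"
  unfolding trace_def diag_op_def by (simp add: of_real_sum)

lemma trace_unitary_diag:
  "unitary_op U \<Longrightarrow> trace (U ** diag_op l ** cadj U) = of_real (\<Sum>i\<in>UNIV. l i)"
  by (simp add: trace_unitary_conj trace_diag_op)

lemma unitary_conj_diag_op:
  assumes "unitary_op U" and "A = U ** diag_op l ** cadj U"
  shows "cadj U ** A ** U = diag_op l"
proof -
  have "cadj U ** A ** U = (cadj U ** U) ** diag_op l ** (cadj U ** U)"
    unfolding assms(2) by (simp add: matrix_mul_assoc)
  then show ?thesis using assms(1) unfolding unitary_op_def by simp
qed

lemma mult_cnj_cmod_square: "z * cnj z = of_real ((cmod z)\<^sup>2)"
  by (simp only: complex_norm_square)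

lemma cnj_mult_cmod_square: "cnj z * z = of_real ((cmod z)\<^sup>2)"
  by (simp only: complex_norm_square mult.commute)

lemma gram_diag_entry: "(cadj M ** M) $ j $ j = of_real (\<Sum>k\<in>UNIV. (cmod (M $ k $ j))\<^sup>2)"
  unfolding matrix_matrix_mult_def cadj_def of_real_sum by (simp add: cnj_mult_cmod_square)

lemma gram_diag_entry': "(M ** cadj M) $ k $ k = of_real (\<Sum>j\<in>UNIV. (cmod (M $ k $ j))\<^sup>2)"
  unfolding matrix_matrix_mult_def cadj_def of_real_sum by (simp add: mult_cnj_cmod_square)

lemma diag_conj_diag_entry:
  "(M ** diag_op l ** cadj M) $ k $ k = of_real (\<Sum>j\<in>UNIV. l j * (cmod (M $ k $ j))\<^sup>2)"
proof -
  have "(M ** diag_op l ** cadj M) $ k $ k = (\<Sum>j\<in>UNIV. of_real (l j) * (M $ k $ j * cnj (M $ k $ j)))"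
    unfolding matrix_matrix_mult_def[of "M ** diag_op l"] by (simp add: matrix_mult_diag_op_entry cadj_def mult_ac)
  then show ?thesis by (simp add: mult_cnj_cmod_square of_real_sum del: of_real_power)
qed

section \<open>Spectral theorem for Hermitian matrices\<close>

definition orth_compl :: "(complex^'n) set \<Rightarrow> (complex^'n) set" where
  "orth_compl F = {x. \<forall>u\<in>F. cinner u x = 0}"

lemma orth_compl_add: "x \<in> orth_compl F \<Longrightarrow> y \<in> orth_compl F \<Longrightarrow> x + y \<in> orth_compl F"
  unfolding orth_compl_def by (simp add: cinner_add_right)

lemma orth_compl_scale: "x \<in> orth_compl F \<Longrightarrow> c *s x \<in> orth_compl F"
  unfolding orth_compl_def by (simp add: cinner_scale_right)

lemma closed_orth_compl: "closed (orth_compl F)"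
proof -
  have "orth_compl F = (\<Inter>u\<in>F. {x. cinner u x = 0})"
    unfolding orth_compl_def by auto
  then show ?thesis
    by (auto intro!: closed_Collect_eq continuous_on_cinner_right continuous_on_const)
qed

lemma hermitian_orth_compl_invariant:
  assumes "hermitian A" and "\<forall>u\<in>F. \<exists>l. A *v u = l *s u" and "x \<in> orth_compl F"
  shows "A *v x \<in> orth_compl F"
  unfolding orth_compl_def mem_Collect_eq
proof
  fix u assume "u \<in> F"
  then obtain l where "A *v u = l *s u" using assms(2) by blast
  then have "cinner u (A *v x) = cnj l * cinner u x"
    using assms(1) by (simp add: cinner_adj hermitian_def cinner_scale_left)
  then show "cinner u (A *v x) = 0"
    using \<open>u \<in> F\<close> assms(3) unfolding orth_compl_def by simp
qed

lemma exists_nonzero_orth_compl: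
  fixes F :: "(complex^'n) set"
  assumes "finite F" and "card F < CARD('n)"
  shows "\<exists>x. x \<noteq> 0 \<and> x \<in> orth_compl F"
proof -
  \<comment> \<open>Orthogonality for the complex form means real orthogonality to both u and \<open>\<i> u\<close>.\<close>
  define S where "S = F \<union> (\<lambda>u. \<i> *s u) ` F"
  have "finite S" unfolding S_def using assms(1) by simp
  have "card S \<le> card F + card F"
    unfolding S_def using card_Un_le card_image_le[OF assms(1)] by (meson add_left_mono le_trans)
  then have "dim S < DIM(complex^'n)"
    using assms(2) dim_le_card'[OF \<open>finite S\<close>] by simp
  then obtain x where "x \<noteq> 0" and orth: "\<And>y. y \<in> span S \<Longrightarrow> orthogonal x y"
    using orthogonal_to_subspace_exists by blast
  have "cinner u x = 0" if "u \<in> F" for u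
  proof -
    have "u \<in> span S" "\<i> *s u \<in> span S"
      unfolding S_def using that by (auto intro: span_base)
    then have "inner u x = 0" "inner (\<i> *s u) x = 0"
      using orth unfolding orthogonal_def by (metis inner_commute)+
    then show ?thesis using Re_cinner[of u x] Im_cinner[of u x] by (simp add: complex_eq_iff)
  qed
  then show ?thesis using \<open>x \<noteq> 0\<close> unfolding orth_compl_def by blast
qed

lemma hermitian_form_zero_imp_kernel:
  fixes B :: "complex^'n^'n"
  assumes herm: "hermitian B"
    and add: "\<And>x y. x \<in> C \<Longrightarrow> y \<in> C \<Longrightarrow> x + y \<in> C"
    and scale: "\<And>x c. x \<in> C \<Longrightarrow> c *s x \<in> C"
    and inv: "\<And>x. x \<in> C \<Longrightarrow> B *v x \<in> C"
    and nonpos: "\<And>z. z \<in> C \<Longrightarrow> Re (cinner z (B *v z)) \<le> 0"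
    and v: "v \<in> C" "Re (cinner v (B *v v)) = 0"
  shows "B *v v = 0"
proof -
  define w where "w = B *v v"
  define a where "a = (norm w)\<^sup>2"
  define g where "g = Re (cinner w (B *v w))"
  have "w \<in> C" using inv v unfolding w_def by simp
  have g0: "g \<le> 0" using nonpos \<open>w \<in> C\<close> unfolding g_def by simp
  \<comment> \<open>Expanding the form at \<open>v + t w\<close>, which lies in C, gives this quadratic in t.\<close>
  have quadratic: "2 * t * a + t\<^sup>2 * g \<le> 0" for t :: real
  proof -
    have "cinner v (B *v w) = cinner w w"
      using cinner_adj[of v B w] herm unfolding w_def hermitian_def by simp
    moreover have "cinner w (B *v v) = cinner w w" unfolding w_def ..
    moreover have "cinner (v + of_real t *s w) (B *v (v + of_real t *s w))
        = cinner v (B *v v) + of_real t * (cinner v (B *v w) + cinner w (B *v v))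
          + (of_real t)\<^sup>2 * cinner w (B *v w)"
      by (simp add: matrix_vector_right_distrib matrix_vector_mult_scale cinner_add_left
          cinner_add_right cinner_scale_left cinner_scale_right algebra_simps power2_eq_square)
    ultimately have "cinner (v + of_real t *s w) (B *v (v + of_real t *s w))
        = cinner v (B *v v) + of_real (2 * t * a) + (of_real t)\<^sup>2 * cinner w (B *v w)"
      unfolding cinner_self a_def by simp
    then have "Re (cinner (v + of_real t *s w) (B *v (v + of_real t *s w))) = 2 * t * a + t\<^sup>2 * g"
      using v(2) unfolding g_def by (simp add: power2_eq_square)
    then show ?thesis using nonpos[OF add[OF v(1) scale[OF \<open>w \<in> C\<close>, of "of_real t"]]] by simp
  qed
  have "a \<le> 0"
  proof (cases "g = 0")
    case True
    then show ?thesis using quadratic[of 1] by simp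
  next
    case False
    then have "g < 0" using g0 by simp
    have "2 * (a / - g) * a + (a / - g)\<^sup>2 * g \<le> 0" by (rule quadratic)
    then have "a\<^sup>2 / - g \<le> 0" using \<open>g < 0\<close> by (simp add: field_simps power2_eq_square)
    then show ?thesis using \<open>g < 0\<close> by (simp add: zero_le_divide_iff)
  qed
  then have "norm w = 0" unfolding a_def by simp
  then show ?thesis unfolding w_def by simp
qed

lemma quadratic_form_le_of_sphere:
  assumes scale: "\<And>x c. x \<in> C \<Longrightarrow> c *s x \<in> C"
    and bound: "\<And>y. y \<in> C \<Longrightarrow> norm y = 1 \<Longrightarrow> Re (cinner y ((A::complex^'n^'n) *v y)) \<le> l"
    and "z \<in> C"
  shows "Re (cinner z (A *v z)) \<le> l * (norm z)\<^sup>2"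
proof (cases "z = 0")
  case False
  define y where "y = of_real (1 / norm z) *s z"
  have "norm y = 1" unfolding y_def norm_vector_scale using False by (simp add: norm_divide)
  then have "(1 / norm z)\<^sup>2 * Re (cinner z (A *v z)) \<le> l"
    using bound[of y] scale[OF \<open>z \<in> C\<close>] unfolding y_def
    by (simp add: matrix_vector_mult_scale cinner_scale_left cinner_scale_right power2_eq_square)
  then show ?thesis using False by (simp add: field_simps)
qed simp

lemma hermitian_unit_eigenvector_in_subspace:
  fixes A :: "complex^'n^'n"
  assumes herm: "hermitian A" and "closed C"
    and add: "\<And>x y. x \<in> C \<Longrightarrow> y \<in> C \<Longrightarrow> x + y \<in> C"
    and scale: "\<And>x c. x \<in> C \<Longrightarrow> c *s x \<in> C"
    and inv: "\<And>x. x \<in> C \<Longrightarrow> A *v x \<in> C"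
    and "x \<in> C" "x \<noteq> 0"
  shows "\<exists>v\<in>C. norm v = 1 \<and> (\<exists>l::real. A *v v = of_real l *s v)"
proof -
  \<comment> \<open>A maximiser of the quadratic form on the unit sphere of C is an eigenvector.\<close>
  define K where "K = C \<inter> sphere 0 1"
  have "compact K"
    unfolding K_def using \<open>closed C\<close> by (simp add: closed_Int_compact)
  have "of_real (1 / norm x) *s x \<in> K"
    unfolding K_def using scale \<open>x \<in> C\<close> \<open>x \<noteq> 0\<close> by (simp add: norm_vector_scale norm_divide)
  then obtain v where "v \<in> K"
    and vmax: "\<And>y. y \<in> K \<Longrightarrow> Re (cinner y (A *v y)) \<le> Re (cinner v (A *v v))"
    using continuous_attains_sup[OF \<open>compact K\<close> _ continuous_on_quadratic_form] by blast
  then have "v \<in> C" and "norm v = 1" unfolding K_def by auto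
  define l where "l = Re (cinner v (A *v v))"
  define B where "B = A - mat (of_real l)"
  have Bv: "B *v z = A *v z - of_real l *s z" for z
    unfolding B_def by (simp add: matrix_vector_mult_diff_rdistrib mat_mult_vector)
  have form_B: "cinner z (B *v z) = cinner z (A *v z) - of_real (l * (norm z)\<^sup>2)" for z
    unfolding Bv by (simp add: cinner_diff_right cinner_scale_right cinner_self)
  have "hermitian B"
    using herm unfolding B_def hermitian_def by (simp add: cadj_def vec_eq_iff mat_def)
  moreover have "B *v z \<in> C" if "z \<in> C" for z
    using add[OF inv[OF that] scale[OF that, of "- of_real l"]] unfolding Bv by simp
  moreover have "Re (cinner z (B *v z)) \<le> 0" if "z \<in> C" for z
    using quadratic_form_le_of_sphere[OF scale _ that, of A l] vmax
    unfolding form_B K_def l_def by simp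
  moreover have "Re (cinner v (B *v v)) = 0"
    unfolding form_B \<open>norm v = 1\<close> l_def by simp
  ultimately have "B *v v = 0"
    using hermitian_form_zero_imp_kernel[OF _ add scale] \<open>v \<in> C\<close> by blast
  then have "A *v v = of_real l *s v" unfolding Bv by simp
  then show ?thesis using \<open>v \<in> C\<close> \<open>norm v = 1\<close> by blast
qed

definition orthonormal_eigenvectors :: "complex^'n^'n \<Rightarrow> (complex^'n) set \<Rightarrow> bool" where
  "orthonormal_eigenvectors A F \<longleftrightarrow>
     (\<forall>u\<in>F. cinner u u = 1 \<and> (\<exists>l::real. A *v u = of_real l *s u)) \<and>
     (\<forall>u\<in>F. \<forall>w\<in>F. u \<noteq> w \<longrightarrow> cinner u w = 0)"

lemma orthonormal_eigenvectors_exist: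
  fixes A :: "complex^'n^'n"
  assumes herm: "hermitian A"
  shows "k \<le> CARD('n) \<Longrightarrow> \<exists>F. finite F \<and> card F = k \<and> orthonormal_eigenvectors A F"
proof (induction k)
  case 0
  show ?case by (intro exI[of _ "{}"]) (simp add: orthonormal_eigenvectors_def)
next
  case (Suc k)
  then obtain F where F: "finite F" "card F = k" "orthonormal_eigenvectors A F" by auto
  then obtain x where "x \<noteq> 0" "x \<in> orth_compl F"
    using exists_nonzero_orth_compl Suc.prems by (metis Suc_le_lessD)
  moreover have "\<forall>u\<in>F. \<exists>l. A *v u = l *s u"
    using F(3) unfolding orthonormal_eigenvectors_def by blast
  ultimately obtain v where v: "v \<in> orth_compl F" "norm v = 1" "\<exists>l::real. A *v v = of_real l *s v"
    using hermitian_unit_eigenvector_in_subspace[OF herm closed_orth_compl orth_compl_add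
        orth_compl_scale hermitian_orth_compl_invariant[OF herm]] by metis
  have "cinner v v = 1" using v(2) by (simp add: cinner_self)
  moreover have "cinner u v = 0" "cinner v u = 0" if "u \<in> F" for u
    using v(1) that cinner_commute[of v u] unfolding orth_compl_def by auto
  ultimately have "orthonormal_eigenvectors A (insert v F)" "v \<notin> F"
    using F(3) v(3) unfolding orthonormal_eigenvectors_def by auto
  then show ?case using F by (intro exI[of _ "insert v F"]) simp
qed

lemma hermitian_diagonalization:
  fixes A :: "complex^'n^'n"
  assumes herm: "hermitian A"
  shows "\<exists>U l. unitary_op U \<and> A = U ** diag_op l ** cadj U"
proof -
  obtain F where F: "finite F" "card F = CARD('n)" "orthonormal_eigenvectors A F"
    using orthonormal_eigenvectors_exist[OF herm, of "CARD('n)"] by auto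
  then obtain h where h: "bij_betw h (UNIV::'n set) F"
    using finite_same_card_bij[of "UNIV::'n set" F] by auto
  then have hF: "h j \<in> F" and h_eq: "h i = h j \<longleftrightarrow> i = j" for i j
    by (auto simp: bij_betw_def inj_on_def)
  define l where "l j = (SOME l::real. A *v h j = of_real l *s h j)" for j
  have eig: "A *v h j = of_real (l j) *s h j" for j
    unfolding l_def by (rule someI_ex) (use F(3) hF in \<open>auto simp: orthonormal_eigenvectors_def\<close>)
  define U where "U = (\<chi> i j. h j $ i)"
  have "(cadj U ** U) $ i $ j = cinner (h i) (h j)" for i j
    unfolding U_def cadj_def matrix_matrix_mult_def cinner_def by simp
  moreover have "cinner (h i) (h j) = (if i = j then 1 else 0)" for i j
    using F(3) hF h_eq[of i j] unfolding orthonormal_eigenvectors_def by auto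
  ultimately have "cadj U ** U = mat 1" by (simp add: vec_eq_iff mat_def)
  then have U: "unitary_op U"
    unfolding unitary_op_def using matrix_left_right_inverse by blast
  have "(A ** U) $ i $ j = (A *v h j) $ i" for i j
    unfolding U_def matrix_matrix_mult_def matrix_vector_mult_def by simp
  then have AU: "A ** U = U ** diag_op l"
    by (simp add: vec_eq_iff eig matrix_mult_diag_op_entry U_def mult.commute)
  have "A = A ** (U ** cadj U)" using U unfolding unitary_op_def by simp
  also have "\<dots> = U ** diag_op l ** cadj U" by (simp add: matrix_mul_assoc AU)
  finally show ?thesis using U by blast
qed

section \<open>Positive operators and von Neumann entropy\<close>

lemma positive_op_hermitian:
  assumes "positive_op (A::complex^'n^'n)"
  shows "hermitian A"
proof -
  have real: "Im (cinner x (A *v x)) = 0" for x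
    using assms unfolding positive_op_iff_cinner by blast
  have form: "cinner (axis a 1 + c *s axis b 1) (A *v (axis a 1 + c *s axis b 1))
      = A$a$a + c * A$a$b + cnj c * A$b$a + cnj c * c * A$b$b" for a b c
    by (simp add: matrix_vector_right_distrib matrix_vector_mult_scale cinner_add_left
        cinner_add_right cinner_scale_left cinner_scale_right cinner_axis_left
        matrix_vector_mult_axis) (simp add: algebra_simps)
  \<comment> \<open>Polarisation: the form is real at \<open>e_a + c e_b\<close> for \<open>c \<in> {0, 1, \<i>}\<close>.\<close>
  have "cnj (A $ b $ a) = A $ a $ b" for a b
  proof -
    have d: "Im (A$a$a) = 0" for a
      using real[of "axis a 1 + 0 *s axis a 1"] form[of a 0 a] by simp
    have "Im (A$a$a + A$a$b + A$b$a + A$b$b) = 0"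
      using real[of "axis a 1 + 1 *s axis b 1"] form[of a 1 b] by simp
    moreover have "Im (A$a$a + \<i> * A$a$b + cnj \<i> * A$b$a + cnj \<i> * \<i> * A$b$b) = 0"
      using real[of "axis a 1 + \<i> *s axis b 1"] form[of a "\<i>" b] by simp
    ultimately show ?thesis using d[of a] d[of b] by (simp add: complex_eq_iff)
  qed
  then show ?thesis unfolding hermitian_def cadj_def by (simp add: vec_eq_iff)
qed

lemma positive_op_diag_entry:
  assumes "positive_op A"
  shows "A $ k $ k = of_real (Re (A $ k $ k))" and "0 \<le> Re (A $ k $ k)"
proof -
  have "cinner (axis k 1) (A *v axis k 1) = A $ k $ k"
    by (simp add: cinner_axis_left matrix_vector_mult_axis)
  then have "Im (A $ k $ k) = 0" "0 \<le> Re (A $ k $ k)"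
    using assms unfolding positive_op_iff_cinner by metis+
  then show "A $ k $ k = of_real (Re (A $ k $ k))" and "0 \<le> Re (A $ k $ k)"
    by (simp_all add: complex_eq_iff)
qed

lemma positive_op_diag_op:
  assumes "\<And>i. 0 \<le> l i"
  shows "positive_op (diag_op l)"
proof -
  have "cinner x (diag_op l *v x) = of_real (\<Sum>i\<in>UNIV. l i * (cmod (x $ i))\<^sup>2)" for x
    unfolding cinner_def diag_op_mult_vector of_real_sum
    by (rule sum.cong) (simp_all add: complex_norm_square[symmetric] mult_ac)
  then show ?thesis
    unfolding positive_op_iff_cinner using assms by (simp add: sum_nonneg)
qed

lemma positive_op_congruence:
  assumes "positive_op A"
  shows "positive_op (cadj B ** A ** B)"
proof -
  have "cinner x ((cadj B ** A ** B) *v x) = cinner (B *v x) (A *v (B *v x))" for x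
    by (simp add: matrix_vector_mul_assoc[symmetric] cinner_adj)
  then show ?thesis using assms unfolding positive_op_iff_cinner by simp
qed

lemma positive_op_unitary_diag:
  assumes "\<And>i. 0 \<le> l i"
  shows "positive_op (U ** diag_op l ** cadj U)"
  using positive_op_congruence[OF positive_op_diag_op[OF assms], of "cadj U"] by simp

lemma positive_op_scaleR:
  assumes "positive_op A" and "0 \<le> c"
  shows "positive_op (c *\<^sub>R A)"
proof -
  have "(c *\<^sub>R A) *v x = of_real c *s (A *v x)" for x
    by (simp add: vec_eq_iff matrix_vector_mult_def scaleR_matrix_entry sum_distrib_left mult.assoc
        del: vector_scaleR_component)
  then show ?thesis
    using assms unfolding positive_op_iff_cinner by (simp add: cinner_scale_right)
qed

lemma positive_op_eigenvalue_nonneg: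
  assumes "positive_op A" and "unitary_op U" and "A = U ** diag_op l ** cadj U"
  shows "0 \<le> l i"
  using positive_op_diag_entry(2)[OF positive_op_congruence[OF assms(1)], of U i]
  unfolding unitary_conj_diag_op[OF assms(2,3)] by (simp add: diag_op_def)

lemma density_op_eigenvalues:
  assumes "density_op A" and "unitary_op U" and "A = U ** diag_op l ** cadj U"
  shows "0 \<le> l i" and "(\<Sum>i\<in>UNIV. l i) = 1"
  using assms positive_op_eigenvalue_nonneg trace_unitary_diag[OF assms(2), of l]
  unfolding density_op_def by (auto simp del: of_real_sum)

lemma positive_op_trace:
  assumes "positive_op A"
  shows "trace A = of_real (Re (trace A))" and "0 \<le> Re (trace A)"
proof -
  have "trace A = of_real (\<Sum>k\<in>UNIV. Re (A $ k $ k))"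
    unfolding trace_def of_real_sum by (intro sum.cong refl) (rule positive_op_diag_entry(1)[OF assms])
  then show "trace A = of_real (Re (trace A))" and "0 \<le> Re (trace A)"
    using positive_op_diag_entry(2)[OF assms] by (simp_all add: sum_nonneg)
qed

lemma positive_op_trace_zero:
  assumes "positive_op A" and "Re (trace A) = 0"
  shows "A = 0"
proof -
  obtain U l where U: "unitary_op U" and A: "A = U ** diag_op l ** cadj U"
    using hermitian_diagonalization[OF positive_op_hermitian[OF assms(1)]] by blast
  have "0 \<le> l i" for i by (rule positive_op_eigenvalue_nonneg[OF assms(1) U A])
  moreover have "(\<Sum>i\<in>UNIV. l i) = 0"
    using assms(2) unfolding A trace_unitary_diag[OF U] by simp
  ultimately have "diag_op l = 0"
    by (simp add: sum_nonneg_eq_0_iff diag_op_def vec_eq_iff)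
  then show ?thesis unfolding A by simp
qed

lemma density_op_unitary_conj:
  assumes "density_op \<rho>" and "unitary_op W"
  shows "density_op (W ** \<rho> ** cadj W)"
  using assms(1) positive_op_congruence[of \<rho> "cadj W"] trace_unitary_conj[OF assms(2)]
  unfolding density_op_def by simp

lemma vN_entropy_eigenvalues:
  assumes "hermitian A"
  shows "\<exists>U l. unitary_op U \<and> A = U ** diag_op l ** cadj U \<and>
           vN_entropy A = - (\<Sum>i\<in>UNIV. l i * ln (l i))"
proof -
  \<comment> \<open>Only the diagonalisation picked by SOME in mat_fun computes vN_entropy; no
    uniqueness of eigenvalues is needed.\<close>
  define D where "D = (\<lambda>(U, l). unitary_op U \<and> A = U ** diag_op l ** cadj U)"
  obtain U l where Ul: "(SOME Ul. D Ul) = (U, l)" by (cases "SOME Ul. D Ul")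
  have "D (U, l)"
    using someI_ex[of D] hermitian_diagonalization[OF assms] Ul unfolding D_def by auto
  then have U: "unitary_op U" and A: "A = U ** diag_op l ** cadj U" unfolding D_def by auto
  have "mat_fun ln A = U ** diag_op (ln \<circ> l) ** cadj U"
    using Ul unfolding mat_fun_def D_def by simp
  then have "A ** mat_fun ln A = U ** (diag_op l ** (cadj U ** U) ** diag_op (ln \<circ> l)) ** cadj U"
    unfolding A by (simp add: matrix_mul_assoc)
  also have "\<dots> = U ** diag_op (\<lambda>i. l i * ln (l i)) ** cadj U"
    using U unfolding unitary_op_def by (simp add: diag_op_mult comp_def)
  finally have "trace (A ** mat_fun ln A) = of_real (\<Sum>i\<in>UNIV. l i * ln (l i))"
    by (simp only: trace_unitary_diag[OF U])
  then have "vN_entropy A = - (\<Sum>i\<in>UNIV. l i * ln (l i))"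
    unfolding vN_entropy_def by simp
  then show ?thesis using U A by blast
qed

section \<open>Entropy under doubly substochastic maps\<close>

lemma xlnx_ge_tangent:
  fixes s c :: real
  assumes "0 \<le> s" and "0 < c"
  shows "s * ln c + s - c \<le> s * ln s"
proof (cases "s = 0")
  case False
  then have "0 < s" using assms(1) by simp
  have "ln (c / s) \<le> c / s - 1" using ln_le_minus_one \<open>0 < s\<close> assms(2) by simp
  then have "s * (ln c - ln s) \<le> s * (c / s - 1)"
    using \<open>0 < s\<close> assms(2) by (simp add: ln_div)
  then show ?thesis using \<open>0 < s\<close> by (simp add: algebra_simps)
qed (use assms in simp)

lemma xlnx_jensen_subprobability:
  fixes d s :: "'j \<Rightarrow> real"
  assumes "finite J" and d: "\<And>j. j \<in> J \<Longrightarrow> 0 \<le> d j" and s: "\<And>j. j \<in> J \<Longrightarrow> 0 \<le> s j"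
    and total: "(\<Sum>j\<in>J. d j) \<le> 1"
  shows "(\<Sum>j\<in>J. d j * s j) * ln (\<Sum>j\<in>J. d j * s j) \<le> (\<Sum>j\<in>J. d j * (s j * ln (s j)))"
proof -
  define y where "y = (\<Sum>j\<in>J. d j * s j)"
  define t where "t = (\<Sum>j\<in>J. d j)"
  have "0 \<le> y" unfolding y_def using d s by (simp add: sum_nonneg)
  show ?thesis
  proof (cases "y = 0")
    case True
    then have "\<forall>j\<in>J. d j * s j = 0"
      using sum_nonneg_eq_0_iff[OF assms(1), of "\<lambda>j. d j * s j"] d s unfolding y_def by auto
    then have "(\<Sum>j\<in>J. d j * (s j * ln (s j))) = 0" by (intro sum.neutral) auto
    then show ?thesis using True unfolding y_def by simp
  next
    case False
    then have "0 < y" using \<open>0 \<le> y\<close> by simp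
    then have "0 < t"
      unfolding y_def t_def using d s
      by (metis (no_types, lifting) less_eq_real_def mult_eq_0_iff sum.neutral sum_nonneg
          sum_nonneg_eq_0_iff[OF assms(1)])
    \<comment> \<open>Compare each \<open>s j ln (s j)\<close> with the tangent of \<open>x ln x\<close> at the mean \<open>y / t\<close>.\<close>
    define c where "c = y / t"
    have "0 < c" unfolding c_def using \<open>0 < y\<close> \<open>0 < t\<close> by simp
    have "(\<Sum>j\<in>J. d j * (s j * ln c + s j - c)) \<le> (\<Sum>j\<in>J. d j * (s j * ln (s j)))"
      by (rule sum_mono) (use xlnx_ge_tangent[OF s \<open>0 < c\<close>] d in \<open>auto intro: mult_left_mono\<close>)
    moreover have "(\<Sum>j\<in>J. d j * (s j * ln c + s j - c)) = y * ln c + y - c * t"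
      unfolding y_def t_def
      by (simp add: algebra_simps sum.distrib sum_subtractf sum_distrib_left sum_distrib_right)
    moreover have "y * ln c + y - c * t = y * ln y - y * ln t"
      unfolding c_def using \<open>0 < y\<close> \<open>0 < t\<close> by (simp add: ln_div algebra_simps)
    moreover have "ln t \<le> 0" using \<open>0 < t\<close> total unfolding t_def by simp
    ultimately show ?thesis
      using \<open>0 < y\<close> unfolding y_def[symmetric] by (smt (verit) mult_nonneg_nonpos)
  qed
qed

lemma entropy_le_of_doubly_substochastic:
  fixes d :: "'a \<Rightarrow> 'j \<Rightarrow> real" and s :: "'j \<Rightarrow> real"
  assumes "finite I" and "finite J"
    and d: "\<And>a j. a \<in> I \<Longrightarrow> j \<in> J \<Longrightarrow> 0 \<le> d a j" and s: "\<And>j. j \<in> J \<Longrightarrow> 0 \<le> s j"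
    and rows: "\<And>a. a \<in> I \<Longrightarrow> (\<Sum>j\<in>J. d a j) \<le> 1"
    and columns: "\<And>j. j \<in> J \<Longrightarrow> (\<Sum>a\<in>I. d a j) = 1"
  shows "- (\<Sum>j\<in>J. s j * ln (s j))
    \<le> - (\<Sum>a\<in>I. (\<Sum>j\<in>J. d a j * s j) * ln (\<Sum>j\<in>J. d a j * s j))"
proof -
  have "(\<Sum>a\<in>I. (\<Sum>j\<in>J. d a j * s j) * ln (\<Sum>j\<in>J. d a j * s j))
      \<le> (\<Sum>a\<in>I. \<Sum>j\<in>J. d a j * (s j * ln (s j)))"
    by (rule sum_mono, rule xlnx_jensen_subprobability) (use assms in auto)
  also have "\<dots> = (\<Sum>j\<in>J. (\<Sum>a\<in>I. d a j) * (s j * ln (s j)))"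
    by (subst sum.swap) (simp add: sum_distrib_right)
  also have "\<dots> = (\<Sum>j\<in>J. s j * ln (s j))" using columns by simp
  finally show ?thesis by simp
qed

lemma entropy_of_scaled_distribution:
  fixes p :: real
  assumes "0 \<le> p" and "\<And>k. 0 \<le> m k" and "(\<Sum>k\<in>UNIV. m k) = 1"
  shows "- (\<Sum>k\<in>UNIV. p * m k * ln (p * m k))
    = p * (- ln p + - (\<Sum>k\<in>(UNIV::'k::finite set). m k * ln (m k)))"
proof (cases "p = 0")
  case False
  have "p * m k * ln (p * m k) = p * ln p * m k + p * (m k * ln (m k))" for k
    using assms(2)[of k] \<open>0 \<le> p\<close> False
    by (cases "m k = 0") (simp_all add: ln_mult algebra_simps)
  then show ?thesis
    by (simp add: sum.distrib sum_distrib_left[symmetric] assms(3) algebra_simps)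
qed simp

section \<open>Measurements\<close>

definition kraus_family :: "('r::finite \<Rightarrow> complex^'n^'n) \<Rightarrow> bool" where
  "kraus_family K \<longleftrightarrow> (\<Sum>r\<in>UNIV. cadj (K r) ** K r) = mat 1"

lemma kraus_family_unitary_mult:
  assumes "kraus_family K" and L: "\<And>r. unitary_op (L r)" and "unitary_op R"
  shows "kraus_family (\<lambda>r. L r ** K r ** R)"
proof -
  have "cadj (L r ** K r ** R) ** (L r ** K r ** R) = cadj R ** (cadj (K r) ** K r) ** R" for r
    by (simp add: cadj_mult matrix_mul_assoc unitary_op_cancel(1)[OF L])
  then have "(\<Sum>r\<in>UNIV. cadj (L r ** K r ** R) ** (L r ** K r ** R))
      = cadj R ** (\<Sum>r\<in>UNIV. cadj (K r) ** K r) ** R"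
    by (simp add: sum_matrix_mult_left sum_matrix_mult_right)
  then show ?thesis
    using assms(1,3) unfolding kraus_family_def unitary_op_def by simp
qed

lemma kraus_family_column_sum:
  assumes "kraus_family K"
  shows "(\<Sum>r\<in>UNIV. \<Sum>k\<in>UNIV. (cmod (K r $ k $ j))\<^sup>2) = 1"
proof -
  have "of_real (\<Sum>r\<in>UNIV. \<Sum>k\<in>UNIV. (cmod (K r $ k $ j))\<^sup>2)
      = (\<Sum>r\<in>UNIV. cadj (K r) ** K r) $ j $ j"
    by (simp only: sum_matrix_entry gram_diag_entry of_real_sum)
  also have "\<dots> = 1"
    using assms unfolding kraus_family_def by (simp add: mat_def)
  finally show ?thesis by (simp only: of_real_eq_1_iff)
qed

lemma kraus_family_column_le:
  assumes "kraus_family K"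
  shows "(\<Sum>k\<in>UNIV. (cmod (K r $ k $ j))\<^sup>2) \<le> 1"
  using member_le_sum[of r UNIV "\<lambda>r. \<Sum>k\<in>UNIV. (cmod (K r $ k $ j))\<^sup>2"]
    kraus_family_column_sum[OF assms] by (simp add: sum_nonneg)

definition outcome_prob :: "complex^'n^'n \<Rightarrow> complex^'n^'n \<Rightarrow> real" where
  "outcome_prob P \<sigma> = Re (trace (P ** \<sigma> ** P))"

text \<open>For p(r) = 0 the post-state is the junk value 0, as x / 0 = 0.\<close>

definition post_state :: "complex^'n^'n \<Rightarrow> complex^'n^'n \<Rightarrow> complex^'n^'n" where
  "post_state P \<sigma> = (1 / outcome_prob P \<sigma>) *\<^sub>R (P ** \<sigma> ** P)"

lemma positive_op_measured: "positive_op \<sigma> \<Longrightarrow> hermitian P \<Longrightarrow> positive_op (P ** \<sigma> ** P)"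
  using positive_op_congruence[of \<sigma> P] unfolding hermitian_def by simp

lemma outcome_prob_nonneg: "positive_op \<sigma> \<Longrightarrow> hermitian P \<Longrightarrow> 0 \<le> outcome_prob P \<sigma>"
  unfolding outcome_prob_def using positive_op_trace(2) positive_op_measured by blast

lemma positive_op_post_state:
  assumes "positive_op \<sigma>" and "hermitian P"
  shows "positive_op (post_state P \<sigma>)"
  unfolding post_state_def
  by (intro positive_op_scaleR positive_op_measured assms) (simp add: outcome_prob_nonneg assms)

lemma scaleR_post_state:
  assumes "positive_op \<sigma>" and "hermitian P"
  shows "outcome_prob P \<sigma> *\<^sub>R post_state P \<sigma> = P ** \<sigma> ** P"
proof (cases "outcome_prob P \<sigma> = 0")
  case True
  then show ?thesis
    using positive_op_trace_zero[OF positive_op_measured[OF assms]] unfolding outcome_prob_def by simp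
qed (simp add: post_state_def)

lemma density_op_post_state:
  assumes "positive_op \<sigma>" and "hermitian P" and "0 < outcome_prob P \<sigma>"
  shows "density_op (post_state P \<sigma>)"
proof -
  have "trace (P ** \<sigma> ** P) = of_real (outcome_prob P \<sigma>)"
    unfolding outcome_prob_def by (rule positive_op_trace(1)[OF positive_op_measured[OF assms(1,2)]])
  then have "trace (post_state P \<sigma>) = 1"
    using assms(3) unfolding post_state_def trace_scaleR by simp
  then show ?thesis
    using positive_op_post_state[OF assms(1,2)] unfolding density_op_def by simp
qed

lemma trace_measurement_sum:
  assumes "kraus_family P" and herm: "\<And>r. hermitian (P r)" and comm: "\<And>r. B ** P r = P r ** B"
  shows "(\<Sum>r\<in>UNIV. trace (B ** (P r ** \<sigma> ** P r))) = trace (B ** \<sigma>)"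
proof -
  have "trace (B ** (P r ** \<sigma> ** P r)) = trace (B ** (cadj (P r) ** P r) ** \<sigma>)" for r
  proof -
    have "trace (B ** (P r ** \<sigma> ** P r)) = trace (P r ** (B ** (P r ** \<sigma>)))"
      by (metis matrix_mul_assoc trace_mul_sym)
    also have "\<dots> = trace (B ** (cadj (P r) ** P r) ** \<sigma>)"
      using herm[of r] unfolding hermitian_def by (simp add: matrix_mul_assoc flip: comm)
    finally show ?thesis .
  qed
  then have "(\<Sum>r\<in>UNIV. trace (B ** (P r ** \<sigma> ** P r)))
      = trace (B ** (\<Sum>r\<in>UNIV. cadj (P r) ** P r) ** \<sigma>)"
    by (simp add: trace_sum sum_matrix_mult_left sum_matrix_mult_right)
  then show ?thesis using assms(1) unfolding kraus_family_def by simp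
qed

lemma sum_outcome_prob:
  assumes "density_op \<sigma>" and "kraus_family P" and "\<And>r. hermitian (P r)"
  shows "(\<Sum>r\<in>UNIV. outcome_prob (P r) \<sigma>) = 1"
  using trace_measurement_sum[OF assms(2,3), of "mat 1" \<sigma>] assms(1)
  unfolding outcome_prob_def density_op_def by (simp flip: Re_sum)

section \<open>Operators on the system and units\<close>

type_synonym ('s, 'm, 'u) full_op = "complex^(('s \<times> 'm) \<times> 'u)^(('s \<times> 'm) \<times> 'u)"

lemma tensor_op_mult:
  "tensor_op (A :: complex^'a::finite^'a) (C :: complex^'b::finite^'b) ** tensor_op B D
    = tensor_op (A ** B) (C ** D)"
  unfolding tensor_op_def matrix_matrix_mult_def
  by (simp add: vec_eq_iff sum_UNIV_prod sum_product mult_ac)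

lemma cadj_tensor_op: "cadj (tensor_op A B) = tensor_op (cadj A) (cadj B)"
  unfolding cadj_def tensor_op_def by (simp add: vec_eq_iff)

lemma tensor_op_diag_op:
  "tensor_op (diag_op a :: complex^'a::finite^'a) (diag_op b :: complex^'b::finite^'b)
    = diag_op (\<lambda>i. a (fst i) * b (snd i))"
  unfolding tensor_op_def diag_op_def by (auto simp: vec_eq_iff prod_eq_iff)

lemma trace_tensor_op:
  "trace (tensor_op (A :: complex^'a::finite^'a) (B :: complex^'b::finite^'b)) = trace A * trace B"
  unfolding trace_def tensor_op_def by (simp add: sum_UNIV_prod sum_product)

lemma density_op_tensor_op:
  fixes A :: "complex^'a::finite^'a" and B :: "complex^'b::finite^'b"
  assumes A: "density_op A" and B: "density_op B"
  shows "density_op (tensor_op A B)"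
proof -
  have "positive_op A" "positive_op B" using A B unfolding density_op_def by auto
  obtain UA a where UA: "unitary_op UA" "A = UA ** diag_op a ** cadj UA"
    using hermitian_diagonalization[OF positive_op_hermitian[OF \<open>positive_op A\<close>]] by blast
  obtain UB b where UB: "unitary_op UB" "B = UB ** diag_op b ** cadj UB"
    using hermitian_diagonalization[OF positive_op_hermitian[OF \<open>positive_op B\<close>]] by blast
  have "tensor_op A B
      = tensor_op UA UB ** diag_op (\<lambda>i. a (fst i) * b (snd i)) ** cadj (tensor_op UA UB)"
    unfolding tensor_op_diag_op[symmetric] cadj_tensor_op tensor_op_mult UA(2) UB(2) ..
  also have "positive_op \<dots>"
    using positive_op_eigenvalue_nonneg[OF \<open>positive_op A\<close> UA]
      positive_op_eigenvalue_nonneg[OF \<open>positive_op B\<close> UB]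
    by (intro positive_op_unitary_diag mult_nonneg_nonneg)
  finally have "positive_op (tensor_op A B)" .
  then show ?thesis using A B unfolding density_op_def trace_tensor_op by simp
qed

lemma lift_SU_mult:
  "(lift_SU A :: ('s::finite, 'm::finite, 'u::finite) full_op) ** lift_SU B = lift_SU (A ** B)"
proof -
  have "(lift_SU A ** lift_SU B :: ('s, 'm, 'u) full_op) $ ((s, m), u) $ ((s', m'), u')
      = (\<Sum>a\<in>UNIV. \<Sum>b\<in>UNIV. if b = m then
           (if m = m' then \<Sum>c\<in>UNIV. A $ (s, u) $ (a, c) * B $ (a, c) $ (s', u') else 0) else 0)"
    for s m u s' m' u'
    unfolding lift_SU_def matrix_matrix_mult_def sum_UNIV_prod vec_lambda_beta fst_conv snd_conv
    by (intro sum.cong refl) simp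
  also have "\<dots> s m u s' m' u' = lift_SU (A ** B) $ ((s, m), u) $ ((s', m'), u')" for s m u s' m' u'
    unfolding lift_SU_def matrix_matrix_mult_def sum_UNIV_prod by simp
  finally show ?thesis by (simp add: vec_eq_iff prod_eq_iff)
qed

lemma cadj_lift_SU:
  "cadj (lift_SU A :: ('s::finite, 'm::finite, 'u::finite) full_op) = lift_SU (cadj A)"
  unfolding lift_SU_def cadj_def by (simp add: vec_eq_iff)

lemma lift_SU_mat_1:
  "(lift_SU (mat 1) :: ('s::finite, 'm::finite, 'u::finite) full_op) = mat 1"
  unfolding lift_SU_def mat_def by (auto simp: vec_eq_iff prod_eq_iff)

lemma unitary_op_lift_SU:
  "unitary_op V \<Longrightarrow> unitary_op (lift_SU V :: ('s::finite, 'm::finite, 'u::finite) full_op)"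
  unfolding unitary_op_def cadj_lift_SU lift_SU_mult by (simp add: lift_SU_mat_1)

text \<open>Both other lifts are lift_SU of a tensor product, which reduces their algebra to
  lift_SU_mult and tensor_op_mult.\<close>

lemma lift_U_eq_lift_SU:
  "(lift_U P :: ('s::finite, 'm::finite, 'u::finite) full_op) = lift_SU (tensor_op (mat 1) P)"
  unfolding lift_U_def lift_SU_def tensor_op_def mat_def by (auto simp: vec_eq_iff prod_eq_iff)

lemma lift_S_eq_lift_SU:
  "(lift_S H :: ('s::finite, 'm::finite, 'u::finite) full_op) = lift_SU (tensor_op H (mat 1))"
  unfolding lift_S_def lift_SU_def tensor_op_def mat_def by (auto simp: vec_eq_iff)

lemma lift_S_lift_U_commute:
  "(lift_S H :: ('s::finite, 'm::finite, 'u::finite) full_op) ** lift_U P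
    = lift_U P ** lift_S H"
  unfolding lift_S_eq_lift_SU lift_U_eq_lift_SU lift_SU_mult tensor_op_mult by simp

lemma lift_U_mult:
  "(lift_U A :: ('s::finite, 'm::finite, 'u::finite) full_op) ** lift_U B = lift_U (A ** B)"
  unfolding lift_U_eq_lift_SU lift_SU_mult tensor_op_mult by simp

lemma cadj_lift_U:
  "cadj (lift_U A :: ('s::finite, 'm::finite, 'u::finite) full_op) = lift_U (cadj A)"
  unfolding lift_U_eq_lift_SU cadj_lift_SU cadj_tensor_op by simp

lemma lift_U_sum:
  "(lift_U (\<Sum>r\<in>S. A r) :: ('s::finite, 'm::finite, 'u::finite) full_op)
    = (\<Sum>r\<in>S. lift_U (A r))"
  by (induction S rule: infinite_finite_induct) (auto simp: lift_U_def vec_eq_iff)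

lemma lift_U_mat_1:
  "(lift_U (mat 1) :: ('s::finite, 'm::finite, 'u::finite) full_op) = mat 1"
  unfolding lift_U_def mat_def by (simp add: vec_eq_iff prod_eq_iff)

lemma hermitian_lift_U:
  "hermitian A \<Longrightarrow> hermitian (lift_U A :: ('s::finite, 'm::finite, 'u::finite) full_op)"
  unfolding hermitian_def cadj_lift_U by simp

lemma kraus_family_lift_U:
  assumes "kraus_family P"
  shows "kraus_family (\<lambda>r. lift_U (P r) :: ('s::finite, 'm::finite, 'u::finite) full_op)"
  using assms unfolding kraus_family_def cadj_lift_U lift_U_mult lift_U_sum[symmetric]
  by (simp add: lift_U_mat_1)

section \<open>Entropy production of a control operation\<close>

lemma measurement_energy_balance:
  assumes "density_op \<sigma>" and "kraus_family P" and herm: "\<And>r. hermitian (P r)"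
    and comm: "\<And>r. H ** P r = P r ** H"
  shows "(\<Sum>r\<in>UNIV. outcome_prob (P r) \<sigma> * Re (trace (H ** (post_state (P r) \<sigma> - \<sigma>)))) = 0"
proof -
  have "positive_op \<sigma>" using assms(1) unfolding density_op_def by simp
  have "outcome_prob (P r) \<sigma> * Re (trace (H ** (post_state (P r) \<sigma> - \<sigma>)))
      = Re (trace (H ** (P r ** \<sigma> ** P r))) - outcome_prob (P r) \<sigma> * Re (trace (H ** \<sigma>))" for r
    using scaleR_post_state[OF \<open>positive_op \<sigma>\<close> herm, of r, symmetric]
    by (simp add: matrix_diff_ldistrib trace_sub trace_mult_scaleR_right algebra_simps)
  then show ?thesis
    using trace_measurement_sum[OF assms(2,3) comm, of \<sigma>] sum_outcome_prob[OF assms(1-3)]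
    by (simp add: sum_subtractf sum_distrib_right[symmetric] flip: Re_sum)
qed

lemma entropy_le_measured_eigenvalue_entropy:
  fixes P :: "'r::finite \<Rightarrow> complex^'n^'n"
  assumes kraus: "kraus_family P" and herm: "\<And>r. hermitian (P r)"
    and V: "unitary_op V" and s: "\<And>j. 0 \<le> s j" and U: "\<And>r. unitary_op (U r)"
    and diag: "\<And>r. cadj (U r) ** (P r ** (V ** diag_op s ** cadj V) ** P r) ** U r = diag_op (x r)"
  shows "- (\<Sum>j\<in>UNIV. s j * ln (s j)) \<le> (\<Sum>r\<in>UNIV. - (\<Sum>k\<in>UNIV. x r k * ln (x r k)))"
proof -
  define M where "M r = cadj (U r) ** P r ** V" for r
  define d where "d rk j = (cmod (M (fst rk) $ snd rk $ j))\<^sup>2" for rk j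
  have herm': "cadj (P r) = P r" for r using herm unfolding hermitian_def by simp
  have x: "x r k = (\<Sum>j\<in>UNIV. d (r, k) j * s j)" for r k
  proof -
    have "of_real (x r k) = diag_op (x r) $ k $ k" by (simp add: diag_op_def)
    also have "\<dots> = (M r ** diag_op s ** cadj (M r)) $ k $ k"
      unfolding diag[symmetric] M_def by (simp add: cadj_mult herm' matrix_mul_assoc)
    finally have "x r k = (\<Sum>j\<in>UNIV. s j * (cmod (M r $ k $ j))\<^sup>2)"
      unfolding diag_conj_diag_entry of_real_eq_iff .
    then show ?thesis unfolding d_def by (simp add: mult.commute)
  qed
  \<comment> \<open>d is doubly substochastic: the \<open>M r\<close> form a Kraus family, and
    \<open>M r M r* = (P r U r)* (P r U r)\<close> bounds the rows by the completeness of the \<open>P r\<close>.\<close>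
  have columns: "(\<Sum>rk\<in>UNIV. d rk j) = 1" for j
    using kraus_family_column_sum[OF kraus_family_unitary_mult[OF kraus unitary_op_cadj[OF U] V]]
    unfolding d_def M_def sum_UNIV_prod by simp
  have rows: "(\<Sum>j\<in>UNIV. d (r, k) j) \<le> 1" for r k
  proof -
    have "M r ** cadj (M r) = cadj (P r ** U r) ** (P r ** U r)"
      unfolding M_def by (simp add: cadj_mult herm' matrix_mul_assoc unitary_op_cancel(2)[OF V])
    then have "of_real (\<Sum>j\<in>UNIV. d (r, k) j) = (cadj (P r ** U r) ** (P r ** U r)) $ k $ k"
      unfolding d_def gram_diag_entry'[symmetric] by simp
    then have "(\<Sum>j\<in>UNIV. d (r, k) j) = (\<Sum>l\<in>UNIV. (cmod ((P r ** U r) $ l $ k))\<^sup>2)"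
      by (simp only: gram_diag_entry of_real_eq_iff)
    also have "\<dots> \<le> 1"
      using kraus_family_column_le[OF kraus_family_unitary_mult[OF kraus unitary_op_mat_1 U]] by simp
    finally show ?thesis .
  qed
  have "- (\<Sum>j\<in>UNIV. s j * ln (s j))
      \<le> - (\<Sum>rk\<in>UNIV. (\<Sum>j\<in>UNIV. d rk j * s j) * ln (\<Sum>j\<in>UNIV. d rk j * s j))"
    by (rule entropy_le_of_doubly_substochastic) (use s rows columns in \<open>auto simp: d_def\<close>)
  then show ?thesis
    unfolding sum_UNIV_prod x[symmetric] by (simp add: sum_negf)
qed

lemma measurement_entropy_gain:
  fixes P :: "'r::finite \<Rightarrow> complex^'n^'n"
  assumes "density_op \<rho>" and "unitary_op W" and kraus: "kraus_family P"
    and herm: "\<And>r. hermitian (P r)"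
  defines "\<sigma> \<equiv> W ** \<rho> ** cadj W"
  shows "vN_entropy \<rho> \<le> (\<Sum>r\<in>UNIV. outcome_prob (P r) \<sigma> *
           (- ln (outcome_prob (P r) \<sigma>) + vN_entropy (post_state (P r) \<sigma>)))"
proof -
  have "positive_op \<rho>" using assms(1) unfolding density_op_def by simp
  obtain U0 s where U0: "unitary_op U0" and \<rho>: "\<rho> = U0 ** diag_op s ** cadj U0"
    and entropy_\<rho>: "vN_entropy \<rho> = - (\<Sum>j\<in>UNIV. s j * ln (s j))"
    using vN_entropy_eigenvalues[OF positive_op_hermitian[OF \<open>positive_op \<rho>\<close>]] by blast
  have s: "0 \<le> s j" for j by (rule positive_op_eigenvalue_nonneg[OF \<open>positive_op \<rho>\<close> U0 \<rho>])
  define V where "V = W ** U0"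
  have V: "unitary_op V" unfolding V_def using assms(2) U0 by (rule unitary_op_mult)
  have \<sigma>: "\<sigma> = V ** diag_op s ** cadj V"
    unfolding \<sigma>_def V_def \<rho> by (simp add: cadj_mult matrix_mul_assoc)
  then have "positive_op \<sigma>" using positive_op_unitary_diag[OF s] by simp
  define p where "p r = outcome_prob (P r) \<sigma>" for r
  obtain U m where U: "\<And>r. unitary_op (U r)"
    and post: "\<And>r. post_state (P r) \<sigma> = U r ** diag_op (m r) ** cadj (U r)"
    and entropy_post: "\<And>r. vN_entropy (post_state (P r) \<sigma>) = - (\<Sum>k\<in>UNIV. m r k * ln (m r k))"
    using vN_entropy_eigenvalues[OF positive_op_hermitian[OF positive_op_post_state[OF
          \<open>positive_op \<sigma>\<close> herm]]] by metis
  have "cadj (U r) ** (P r ** \<sigma> ** P r) ** U r = diag_op (\<lambda>k. p r * m r k)" for r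
    unfolding scaleR_post_state[OF \<open>positive_op \<sigma>\<close> herm, symmetric] p_def
    by (simp add: matrix_scalar_ac scalar_matrix_assoc[symmetric] unitary_conj_diag_op[OF U post]
        scaleR_diag_op)
  then have "- (\<Sum>j\<in>UNIV. s j * ln (s j))
      \<le> (\<Sum>r\<in>UNIV. - (\<Sum>k\<in>UNIV. p r * m r k * ln (p r * m r k)))"
    by (intro entropy_le_measured_eigenvalue_entropy[OF kraus herm V s U]) (simp add: \<sigma>)
  also have "\<dots> = (\<Sum>r\<in>UNIV. p r * (- ln (p r) + vN_entropy (post_state (P r) \<sigma>)))"
  proof (intro sum.cong refl)
    fix r
    show "- (\<Sum>k\<in>UNIV. p r * m r k * ln (p r * m r k))
        = p r * (- ln (p r) + vN_entropy (post_state (P r) \<sigma>))"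
    proof (cases "p r = 0")
      case False
      then have "0 < p r"
        using outcome_prob_nonneg[OF \<open>positive_op \<sigma>\<close> herm, of r] unfolding p_def by linarith
      then have "density_op (post_state (P r) \<sigma>)"
        using density_op_post_state[OF \<open>positive_op \<sigma>\<close> herm] unfolding p_def by blast
      then show ?thesis
        unfolding entropy_post using \<open>0 < p r\<close>
        by (intro entropy_of_scaled_distribution) (auto intro: density_op_eigenvalues[OF _ U post])
    qed simp
  qed
  finally show ?thesis unfolding entropy_\<rho> p_def .
qed

lemma sum_over_positive_weights:
  fixes p f :: "'a::finite \<Rightarrow> real"
  assumes "\<And>a. 0 \<le> p a"
  shows "(\<Sum>a | 0 < p a. p a * f a) = (\<Sum>a\<in>UNIV. p a * f a)"
  by (rule sum.mono_neutral_left) (use assms in \<open>auto simp: order_le_less\<close>)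

lemma control_entropy_production_nonneg:
  fixes P :: "'r::finite \<Rightarrow> complex^'n^'n"
  assumes "density_op \<rho>" and "unitary_op W" and "kraus_family P" and herm: "\<And>r. hermitian (P r)"
    and "\<And>r. H ** P r = P r ** H"
  defines "\<sigma> \<equiv> W ** \<rho> ** cadj W"
  shows "0 \<le> (\<Sum>r | 0 < outcome_prob (P r) \<sigma>. outcome_prob (P r) \<sigma> *
      (- ln (outcome_prob (P r) \<sigma>) + vN_entropy (post_state (P r) \<sigma>) - vN_entropy \<rho>
       - \<beta> * Re (trace (H ** (post_state (P r) \<sigma> - \<sigma>)))))"
proof -
  have "density_op \<sigma>" unfolding \<sigma>_def using assms(1,2) by (rule density_op_unitary_conj)
  then have "0 \<le> outcome_prob (P r) \<sigma>" for r
    using outcome_prob_nonneg herm unfolding density_op_def by blast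
  then have "(\<Sum>r | 0 < outcome_prob (P r) \<sigma>. outcome_prob (P r) \<sigma> *
      (- ln (outcome_prob (P r) \<sigma>) + vN_entropy (post_state (P r) \<sigma>) - vN_entropy \<rho>
       - \<beta> * Re (trace (H ** (post_state (P r) \<sigma> - \<sigma>)))))
    = (\<Sum>r\<in>UNIV. outcome_prob (P r) \<sigma> *
        (- ln (outcome_prob (P r) \<sigma>) + vN_entropy (post_state (P r) \<sigma>)))
      - (\<Sum>r\<in>UNIV. outcome_prob (P r) \<sigma>) * vN_entropy \<rho>
      - \<beta> * (\<Sum>r\<in>UNIV. outcome_prob (P r) \<sigma> * Re (trace (H ** (post_state (P r) \<sigma> - \<sigma>))))"
    by (subst sum_over_positive_weights)
      (simp_all add: algebra_simps sum.distrib sum_subtractf sum_distrib_left sum_distrib_right)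
  then show ?thesis
    using measurement_entropy_gain[OF assms(1-4)] sum_outcome_prob[OF \<open>density_op \<sigma>\<close> assms(3,4)]
      measurement_energy_balance[OF \<open>density_op \<sigma>\<close> assms(3-5)]
    unfolding \<sigma>_def by simp
qed

theorem mainTheorem5:
  fixes H_S :: "complex^'s::finite^'s"
    and rho_SM :: "complex^('s \<times> 'm::finite)^('s \<times> 'm)"
    and rho_U :: "complex^'u::finite^'u"
    and V :: "complex^('s \<times> 'u)^('s \<times> 'u)"
    and P :: "'r::finite \<Rightarrow> complex^'u^'u"
    and \<beta> :: real
  assumes "hermitian H_S"
    and "density_op rho_SM"
    and "density_op rho_U"
    and "unitary_op V"
    and "\<And>r. positive_op (P r)"
    and "(\<Sum>r\<in>UNIV. P r ** P r) = mat 1"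
    and "\<beta> > 0"
  shows
    "let rho_minus = tensor_op rho_SM rho_U;
         W = (lift_SU V :: complex^(('s \<times> 'm) \<times> 'u)^(('s \<times> 'm) \<times> 'u));
         sigma = W ** rho_minus ** cadj W;
         Pf = (\<lambda>r. (lift_U (P r) :: complex^(('s \<times> 'm) \<times> 'u)^(('s \<times> 'm) \<times> 'u)));
         p = (\<lambda>r. Re (trace (Pf r ** sigma ** Pf r)));
         rho_plus = (\<lambda>r. (1 / p r) *\<^sub>R (Pf r ** sigma ** Pf r));
         Q = (\<lambda>r. Re (trace ((lift_S H_S :: complex^(('s \<times> 'm) \<times> 'u)^(('s \<times> 'm) \<times> 'u))
                             ** (rho_plus r - sigma))));
         Sigma = (\<lambda>r. - ln (p r) + vN_entropy (rho_plus r) - vN_entropy rho_minus - \<beta> * Q r)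
     in (\<Sum>r | p r > 0. p r * Sigma r) \<ge> 0"
proof -
  have herm_P: "hermitian (P r)" for r by (rule positive_op_hermitian[OF assms(5)])
  then have "kraus_family P"
    using assms(6) unfolding kraus_family_def hermitian_def by simp
  show ?thesis
    using control_entropy_production_nonneg[OF density_op_tensor_op[OF assms(2,3)]
        unitary_op_lift_SU[OF assms(4)] kraus_family_lift_U[OF \<open>kraus_family P\<close>]
        hermitian_lift_U[OF herm_P] lift_S_lift_U_commute, of \<beta>]
    unfolding Let_def outcome_prob_def post_state_def .
qed

end
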